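(* Let $\mathcal{H}_S$ (system) and $\mathcal{H}_B$ (bath) be finite-dimensional Hilbert spaces, and fix a final time $T>0$. Let $t\mapsto \overline{H}_S(t)$ be a continuous family of Hermitian operators on $\mathcal{H}_S$ (the encoded system Hamiltonian), $H_B$ a Hermitian operator on $\mathcal{H}_B$, and set $H_0(t)=\overline{H}_S(t)\otimes I+I\otimes H_B$. Let $H_{\mathrm{p}}$ be a time-independent Hermitian operator on $\mathcal{H}_S$ (the penalty Hamiltonian, acting as $H_{\mathrm{p}}\otimes I$ on $\mathcal{H}_S\otimes\mathcal{H}_B$) with spectral decomposition $H_{\mathrm{p}}=\sum_a \lambda_a \Pi_a$ (distinct eigenvalues $\lambda_a$, spectral projectors $\Pi_a$), let $E_{\mathrm{p}}>0$, and let $V$ be a time-independent Hermitian operator on $\mathcal{H}_S\otimes\mathcal{H}_B$ (the system–bath interaction). Let $P$ be an orthogonal projection on $\mathcal{H}_S$ (acting as $P\otimes I$). Let $c\in\mathbb{R}$ and $W=cI$. Denote by $U_0(t)$, $U_{\mathrm{p}}(t)=e^{-iE_{\mathrm{p}}H_{\mathrm{p}}t}$ and $U_V(t)$ the unitary evolutions (solutions of $i\,\frac{d}{dt}U=H(t)U$, $U(0)=I$) generated respectively by $H_0(t)$, $E_{\mathrm{p}}H_{\mathrm{p}}$ and $H_V(t)=H_0(t)+E_{\mathrm{p}}H_{\mathrm{p}}+V$. Assume that for all $t\in[0,T]$ $$[\overline{H}_S(t),P]=[\overline{H}_S(t),H_{\mathrm{p}}]=0,$$ and that $$\sum_a \Pi_a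 V\Pi_a P=cP.$$ Then, for any unitarily invariant norm $\|\cdot\|$, $$\lim_{E_{\mathrm{p}}\to\infty}\big\|U_V(T)P-U_W(T)P\big\|=0,\qquad\text{where } U_W(T)=e^{-icT}U_0(T)U_{\mathrm{p}}(T).$$
   Context: All operators on $\mathcal{H}_S$ or $\mathcal{H}_B$ are regarded as operators on $\mathcal{H}_S\otimes\mathcal{H}_B$ by tensoring with the identity. $U_W$ is the evolution generated by $H_W=H_0+E_{\mathrm{p}}H_{\mathrm{p}}+W$ with $W=cI$. A norm is unitarily invariant if $\|UXV\|=\|X\|$ for all unitaries $U,V$. *)

theory Defs
  imports "HOL-Analysis.Analysis"
begin

text \<open>Finite-dimensional operators are complex square matrices indexed by a finite type.
  The composite space H_S (x) H_B is indexed by the product type.\<close>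

type_synonym 'n op = "complex ^'n ^'n"

definition cmat_smult :: "complex \<Rightarrow> 'n::finite op \<Rightarrow> 'n op" where
  "cmat_smult c A = (\<chi> i j. c * A $ i $ j)"

definition adjoint :: "'n::finite op \<Rightarrow> 'n op" where
  "adjoint A = (\<chi> i j. cnj (A $ j $ i))"

definition hermitian :: "'n::finite op \<Rightarrow> bool" where
  "hermitian A \<longleftrightarrow> adjoint A = A"

definition unitary :: "'n::finite op \<Rightarrow> bool" where
  "unitary U \<longleftrightarrow> adjoint U ** U = mat 1 \<and> U ** adjoint U = mat 1"

definition orth_proj :: "'n::finite op \<Rightarrow> bool" where
  "orth_proj P \<longleftrightarrow> hermitian P \<and> P ** P = P"

definition kron :: "'s::finite op \<Rightarrow> 'b::finite op \<Rightarrow> ('s \<times> 'b) op" where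
  "kron A B = (\<chi> p q. A $ fst p $ fst q * B $ snd p $ snd q)"

definition spectral_decomp :: "'n::finite op \<Rightarrow> real set \<Rightarrow> (real \<Rightarrow> 'n op) \<Rightarrow> bool" where
  "spectral_decomp H Lam Proj \<longleftrightarrow>
     finite Lam \<and>
     (\<forall>a\<in>Lam. orth_proj (Proj a) \<and> Proj a \<noteq> 0) \<and>
     (\<forall>a\<in>Lam. \<forall>b\<in>Lam. a \<noteq> b \<longrightarrow> Proj a ** Proj b = 0) \<and>
     (\<Sum>a\<in>Lam. Proj a) = mat 1 \<and>
     H = (\<Sum>a\<in>Lam. cmat_smult (complex_of_real a) (Proj a))"

definition evolution :: "real \<Rightarrow> (real \<Rightarrow> 'n::finite op) \<Rightarrow> (real \<Rightarrow> 'n op) \<Rightarrow> bool" where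
  "evolution T H U \<longleftrightarrow> U 0 = mat 1 \<and>
     (\<forall>t\<in>{0..T}. (U has_vector_derivative cmat_smult (- \<i>) (H t ** U t)) (at t within {0..T}))"

definition unitarily_invariant_norm :: "('n::finite op \<Rightarrow> real) \<Rightarrow> bool" where
  "unitarily_invariant_norm N \<longleftrightarrow>
     (\<forall>X. N X = 0 \<longleftrightarrow> X = 0) \<and>
     (\<forall>X Y. N (X + Y) \<le> N X + N Y) \<and>
     (\<forall>c X. N (cmat_smult c X) = cmod c * N X) \<and>
     (\<forall>U V X. unitary U \<longrightarrow> unitary V \<longrightarrow> N (U ** X ** V) = N X)"

end

theory Submission
  imports Defs
begin

text \<open>
  Compare the true evolution UV with the ideal evolution W(t) = e^(-ict) U0(t) Up(t), which
  solves the equation with V replaced by c. Then Psi = UV* W satisfies Psi' = i Psi Vw, where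
  Vw = W* (V - c) W. Since U0 commutes with the spectral projectors Pi_a of Hp, Vw decomposes
  into blocks Pi_a Vint Pi_b oscillating with frequency Ep (a - b), where Vint = U0* (V - c) U0.
  The diagonal blocks annihilate the range of P by the pinching hypothesis, because U0 also
  commutes with P. The off-diagonal part is the derivative of a term of size O(1/Ep) up to a
  remainder of size O(1/Ep), so an integration by parts gives |Psi(T) P - P| = O(1/Ep).
  Unitary invariance and the equivalence of norms in finite dimension transfer this to N.
\<close>

section \<open>Matrix algebra\<close>

lemma cmat_smult_mult_left: "cmat_smult c A ** B = cmat_smult c (A ** B)"
  by (simp add: cmat_smult_def matrix_matrix_mult_def vec_eq_iff sum_distrib_left mult.assoc)

lemma cmat_smult_mult_right: "A ** cmat_smult c B = cmat_smult c (A ** B)"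
  by (simp add: cmat_smult_def matrix_matrix_mult_def vec_eq_iff sum_distrib_left mult.left_commute)

lemma cmat_smult_smult: "cmat_smult a (cmat_smult b A) = cmat_smult (a * b) A"
  by (simp add: cmat_smult_def vec_eq_iff mult.assoc)

lemma cmat_smult_add_left: "cmat_smult (a + b) A = cmat_smult a A + cmat_smult b A"
  by (simp add: cmat_smult_def vec_eq_iff distrib_right)

lemma cmat_smult_add_right: "cmat_smult a (A + B) = cmat_smult a A + cmat_smult a B"
  by (simp add: cmat_smult_def vec_eq_iff distrib_left)

lemma cmat_smult_diff_right: "cmat_smult a (A - B) = cmat_smult a A - cmat_smult a B"
  by (simp add: cmat_smult_def vec_eq_iff right_diff_distrib)

lemma cmat_smult_one [simp]: "cmat_smult 1 A = A"
  and cmat_smult_zero [simp]: "cmat_smult 0 A = 0" "cmat_smult a 0 = 0"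
  and cmat_smult_minus_one [simp]: "cmat_smult (- 1) A = - A"
  by (simp_all add: cmat_smult_def vec_eq_iff)

lemma cmat_smult_minus_left: "cmat_smult (- a) A = - cmat_smult a A"
  by (simp add: cmat_smult_def vec_eq_iff)

lemma cmat_smult_sum: "cmat_smult a (\<Sum>i\<in>S. f i) = (\<Sum>i\<in>S. cmat_smult a (f i))"
  by (induct S rule: infinite_finite_induct) (simp_all add: cmat_smult_add_right)

lemma scaleR_eq_cmat_smult: "r *\<^sub>R A = cmat_smult (complex_of_real r) A"
  by (simp add: cmat_smult_def vec_eq_iff scaleR_conv_of_real[where 'a=complex])

lemma matrix_add_rdistrib: "(A + B) ** C = A ** C + B ** (C::'n::finite op)"
  by (simp add: matrix_matrix_mult_def vec_eq_iff distrib_right sum.distrib)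

lemma matrix_diff_ldistrib: "C ** (A - B) = C ** A - C ** (B::'n::finite op)"
  by (simp add: matrix_matrix_mult_def vec_eq_iff right_diff_distrib sum_subtractf)

lemma matrix_diff_rdistrib: "(A - B) ** C = A ** C - B ** (C::'n::finite op)"
  by (simp add: matrix_matrix_mult_def vec_eq_iff left_diff_distrib sum_subtractf)

lemma matrix_minus_left: "(- A) ** B = - (A ** B)"
  and matrix_minus_right: "A ** (- B) = - (A ** B)"
  for A B :: "'n::finite op"
  by (simp_all add: matrix_matrix_mult_def vec_eq_iff sum_negf)

lemma matrix_sum_ldistrib: "B ** (\<Sum>i\<in>S. f i) = (\<Sum>i\<in>S. B ** f i)"
  for f :: "'i \<Rightarrow> 'n::finite op" and B :: "'n op"
  by (induct S rule: infinite_finite_induct) (simp_all add: matrix_add_ldistrib)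

lemma matrix_sum_rdistrib: "(\<Sum>i\<in>S. f i) ** B = (\<Sum>i\<in>S. f i ** B)"
  for f :: "'i \<Rightarrow> 'n::finite op" and B :: "'n op"
  by (induct S rule: infinite_finite_induct) (simp_all add: matrix_add_rdistrib)

lemma adjoint_adjoint [simp]: "adjoint (adjoint A) = A"
  by (simp add: adjoint_def vec_eq_iff)

lemma adjoint_mult: "adjoint (A ** B) = adjoint B ** adjoint A"
  by (simp add: adjoint_def matrix_matrix_mult_def vec_eq_iff mult.commute)

lemma adjoint_add: "adjoint (A + B) = adjoint A + adjoint B"
  by (simp add: adjoint_def vec_eq_iff)

lemma adjoint_minus: "adjoint (- A) = - adjoint A"
  by (simp add: adjoint_def vec_eq_iff)

lemma adjoint_cmat_smult: "adjoint (cmat_smult a A) = cmat_smult (cnj a) (adjoint A)"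
  by (simp add: adjoint_def cmat_smult_def vec_eq_iff)

lemma adjoint_zero [simp]: "adjoint 0 = 0"
  and adjoint_mat_one [simp]: "adjoint (mat 1) = mat 1"
  by (simp_all add: adjoint_def vec_eq_iff mat_def)

lemma adjoint_sum: "adjoint (\<Sum>i\<in>S. f i) = (\<Sum>i\<in>S. adjoint (f i))"
  by (induct S rule: infinite_finite_induct) (simp_all add: adjoint_add)

lemma kron_mult: "kron A B ** kron C D = kron (A ** C) (B ** D)"
  by (simp add: kron_def matrix_matrix_mult_def vec_eq_iff sum_product
        UNIV_Times_UNIV[symmetric] sum.cartesian_product mult_ac case_prod_unfold del: UNIV_Times_UNIV)

lemma kron_add_left: "kron (A + B) C = kron A C + kron B C"
  by (simp add: kron_def vec_eq_iff distrib_right)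

lemma kron_cmat_smult_left: "kron (cmat_smult a A) C = cmat_smult a (kron A C)"
  by (simp add: kron_def cmat_smult_def vec_eq_iff mult.assoc)

lemma kron_zero_left [simp]: "kron 0 C = 0"
  by (simp add: kron_def vec_eq_iff)

lemma kron_sum_left: "kron (\<Sum>i\<in>S. f i) C = (\<Sum>i\<in>S. kron (f i) C)"
  by (induct S rule: infinite_finite_induct) (simp_all add: kron_add_left)

lemma kron_mat_one [simp]: "kron (mat 1) (mat 1) = mat 1"
  by (auto simp add: kron_def vec_eq_iff mat_def prod_eq_iff)

lemma adjoint_kron: "adjoint (kron A B) = kron (adjoint A) (adjoint B)"
  by (simp add: kron_def adjoint_def vec_eq_iff)

lemma kron_mat_one_eq_0_iff [simp]: "kron A (mat 1 :: 'b::finite op) = 0 \<longleftrightarrow> A = 0"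
proof
  assume "kron A (mat 1 :: 'b op) = 0"
  then have "(kron A (mat 1 :: 'b op)) $ (i, b) $ (j, b) = 0" for i j b by simp
  then show "A = 0" by (simp add: kron_def mat_def vec_eq_iff)
qed (simp add: kron_def vec_eq_iff)

lemma kron_commute_hamiltonian:
  "X ** A = A ** X \<Longrightarrow>
    kron X (mat 1) ** (kron A (mat 1) + kron (mat 1) B) = (kron A (mat 1) + kron (mat 1) B) ** kron X (mat 1)"
  by (simp add: matrix_add_ldistrib matrix_add_rdistrib kron_mult)

lemma hermitian_add: "hermitian A \<Longrightarrow> hermitian B \<Longrightarrow> hermitian (A + B)"
  by (simp add: hermitian_def adjoint_add)

lemma hermitian_kron: "hermitian A \<Longrightarrow> hermitian B \<Longrightarrow> hermitian (kron A B)"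
  by (simp add: hermitian_def adjoint_kron)

lemma hermitian_mat_one: "hermitian (mat 1)"
  by (simp add: hermitian_def)

lemma hermitian_cmat_smult_real: "hermitian A \<Longrightarrow> hermitian (cmat_smult (of_real r) A)"
  by (simp add: hermitian_def adjoint_cmat_smult)

lemma unitaryD: "unitary U \<Longrightarrow> adjoint U ** U = mat 1" "unitary U \<Longrightarrow> U ** adjoint U = mat 1"
  by (simp_all add: unitary_def)

lemma unitary_commute_adjoint:
  assumes "unitary U" "X ** U = U ** X"
  shows "X ** adjoint U = adjoint U ** X"
proof -
  have "adjoint U ** X = adjoint U ** (X ** U) ** adjoint U"
    using unitaryD[OF assms(1)] by (metis matrix_mul_assoc matrix_mul_rid)
  also have "\<dots> = X ** adjoint U"
    using unitaryD[OF assms(1)] assms(2) by (metis matrix_mul_assoc matrix_mul_lid)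
  finally show ?thesis by simp
qed

lemma unitary_adjoint: "unitary U \<Longrightarrow> unitary (adjoint U)"
  by (simp add: unitary_def)

lemma cmat_smult_mat_one_commute: "X ** cmat_smult a (mat 1) = cmat_smult a (mat 1) ** X"
  for X :: "'n::finite op"
  by (simp add: cmat_smult_mult_left cmat_smult_mult_right)

section \<open>Frobenius norm\<close>

text \<open>The Euclidean norm of a matrix of type 'n op is its Frobenius norm.\<close>

lemma norm_vec_power2: "(norm (x::'a::real_normed_vector^'n))\<^sup>2 = (\<Sum>i\<in>UNIV. (norm (x$i))\<^sup>2)"
  by (simp add: norm_vec_def L2_set_def sum_nonneg)

lemma norm_matrix_mult_le:
  fixes A :: "complex^'n^'m" and B :: "complex^'p^'n"
  shows "norm (A ** B) \<le> norm A * norm B"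
proof -
  have entry: "(cmod ((A ** B)$i$j))\<^sup>2 \<le> (norm (A$i))\<^sup>2 * (\<Sum>k\<in>UNIV. (cmod (B$k$j))\<^sup>2)" for i j
  proof -
    have "cmod ((A ** B)$i$j) \<le> (\<Sum>k\<in>UNIV. \<bar>cmod (A$i$k)\<bar> * \<bar>cmod (B$k$j)\<bar>)"
      unfolding matrix_matrix_mult_def by (auto intro: order_trans[OF norm_sum] simp: norm_mult)
    also have "\<dots> \<le> L2_set (\<lambda>k. cmod (A$i$k)) UNIV * L2_set (\<lambda>k. cmod (B$k$j)) UNIV"
      by (rule L2_set_mult_ineq)
    finally have "(cmod ((A ** B)$i$j))\<^sup>2
        \<le> (L2_set (\<lambda>k. cmod (A$i$k)) UNIV * L2_set (\<lambda>k. cmod (B$k$j)) UNIV)\<^sup>2"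
      by (simp add: power_mono)
    then show ?thesis
      by (simp add: power_mult_distrib norm_vec_def L2_set_def sum_nonneg)
  qed
  have "(norm (A ** B))\<^sup>2 \<le> (\<Sum>i\<in>UNIV. \<Sum>j\<in>UNIV. (norm (A$i))\<^sup>2 * (\<Sum>k\<in>UNIV. (cmod (B$k$j))\<^sup>2))"
    by (simp only: norm_vec_power2[of "A ** B"] norm_vec_power2[of "(A ** B)$i" for i])
      (intro sum_mono entry)
  also have "\<dots> = (norm A)\<^sup>2 * (\<Sum>j\<in>UNIV. \<Sum>k\<in>UNIV. (cmod (B$k$j))\<^sup>2)"
    by (simp add: norm_vec_power2[of A] sum_product)
  also have "(\<Sum>j\<in>UNIV. \<Sum>k\<in>UNIV. (cmod (B$k$j))\<^sup>2) = (norm B)\<^sup>2"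
    unfolding norm_vec_power2[of B] norm_vec_power2[of "B$k" for k] by (rule sum.swap)
  finally show ?thesis
    by (simp add: power_mult_distrib[symmetric] power2_le_iff_abs_le)
qed

lemma norm_matrix_mult_bound: "norm A \<le> x \<Longrightarrow> norm B \<le> y \<Longrightarrow> norm (A ** B) \<le> x * y"
  for A B :: "'n::finite op"
  by (meson norm_matrix_mult_le mult_mono norm_ge_zero order_trans)

lemma norm_cmat_smult: "norm (cmat_smult c A) = cmod c * norm A"
  by (simp add: cmat_smult_def norm_vec_def norm_mult L2_set_right_distrib)

lemma norm_unitary: "unitary (U::'n::finite op) \<Longrightarrow> norm U = sqrt (real CARD('n))"
proof -
  assume "unitary U"
  then have "(adjoint U ** U)$j$j = 1" for j by (simp add: unitaryD mat_def)
  moreover have "cnj (U$k$j) * U$k$j = complex_of_real ((cmod (U$k$j))\<^sup>2)" for k j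
    by (simp only: complex_norm_square mult.commute)
  ultimately have "(\<Sum>k\<in>UNIV. complex_of_real ((cmod (U$k$j))\<^sup>2)) = 1" for j
    by (simp add: adjoint_def matrix_matrix_mult_def)
  then have column: "(\<Sum>k\<in>UNIV. (cmod (U$k$j))\<^sup>2) = 1" for j
    by (metis of_real_eq_1_iff of_real_sum)
  have "(norm U)\<^sup>2 = (\<Sum>j\<in>UNIV. \<Sum>k\<in>UNIV. (cmod (U$k$j))\<^sup>2)"
    unfolding norm_vec_power2[of U] norm_vec_power2[of "U$k" for k] by (rule sum.swap)
  then show ?thesis by (simp add: column real_sqrt_unique)
qed

lemma bounded_bilinear_matrix_mult: "bounded_bilinear (\<lambda>A B::'n::finite op. A ** B)"
proof (rule bounded_bilinear.intro)
  show "\<exists>K. \<forall>A B::'n op. norm (A ** B) \<le> norm A * norm B * K"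
    using norm_matrix_mult_le by (metis mult.right_neutral)
qed (simp_all add: matrix_add_ldistrib matrix_add_rdistrib scalar_matrix_assoc matrix_scalar_ac)

lemma bounded_bilinear_cmat_smult: "bounded_bilinear (\<lambda>c A::'n::finite op. cmat_smult c A)"
proof (rule bounded_bilinear.intro)
  show "\<exists>K. \<forall>c (A::'n op). norm (cmat_smult c A) \<le> norm c * norm A * K"
    by (metis norm_cmat_smult order_refl mult.right_neutral)
qed (simp_all add: cmat_smult_add_left cmat_smult_add_right scaleR_eq_cmat_smult cmat_smult_smult
       scaleR_conv_of_real mult.commute)

lemma bounded_linear_adjoint: "bounded_linear (adjoint :: 'n::finite op \<Rightarrow> 'n op)"
  by (simp flip: linear_conv_bounded_linear)
    (rule linearI, simp_all add: adjoint_add scaleR_eq_cmat_smult adjoint_cmat_smult)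

lemma bounded_linear_kron_mat_one: "bounded_linear (\<lambda>A::'s::finite op. kron A (mat 1 :: 'b::finite op))"
  by (simp flip: linear_conv_bounded_linear)
    (rule linearI, simp_all add: kron_add_left scaleR_eq_cmat_smult kron_cmat_smult_left)

lemma continuous_on_matrix_mult:
  "continuous_on S f \<Longrightarrow> continuous_on S g \<Longrightarrow> continuous_on S (\<lambda>x. f x ** g x)"
  for f g :: "'a::topological_space \<Rightarrow> 'n::finite op"
  by (rule bounded_bilinear.continuous_on[OF bounded_bilinear_matrix_mult])

lemma continuous_on_adjoint: "continuous_on S f \<Longrightarrow> continuous_on S (\<lambda>x. adjoint (f x :: 'n::finite op))"
  by (rule bounded_linear.continuous_on[OF bounded_linear_adjoint])

lemma continuous_on_kron_mat_one:
  "continuous_on S f \<Longrightarrow> continuous_on S (\<lambda>x. kron (f x :: 's::finite op) (mat 1 :: 'b::finite op))"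
  by (rule bounded_linear.continuous_on[OF bounded_linear_kron_mat_one])

section \<open>Evolutions\<close>

lemma has_vector_derivative_matrix_mult:
  "(f has_vector_derivative f') (at x within s) \<Longrightarrow> (g has_vector_derivative g') (at x within s) \<Longrightarrow>
    ((\<lambda>x. f x ** g x) has_vector_derivative f x ** g' + f' ** g x) (at x within s)"
  for f g :: "real \<Rightarrow> 'n::finite op"
  by (rule bounded_bilinear.has_vector_derivative[OF bounded_bilinear_matrix_mult])

lemma has_vector_derivative_cmat_smult:
  "(a has_vector_derivative a') (at x within s) \<Longrightarrow> (f has_vector_derivative f') (at x within s) \<Longrightarrow>
    ((\<lambda>x. cmat_smult (a x) (f x :: 'n::finite op)) has_vector_derivative
      cmat_smult (a x) f' + cmat_smult a' (f x)) (at x within s)"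
  by (rule bounded_bilinear.has_vector_derivative[OF bounded_bilinear_cmat_smult])

lemma has_vector_derivative_cmat_smult_right:
  "(f has_vector_derivative f') F \<Longrightarrow>
    ((\<lambda>x. cmat_smult c (f x :: 'n::finite op)) has_vector_derivative cmat_smult c f') F"
  by (rule bounded_linear.has_vector_derivative[OF
        bounded_bilinear.bounded_linear_right[OF bounded_bilinear_cmat_smult]])

lemma has_vector_derivative_adjoint:
  "(f has_vector_derivative f') F \<Longrightarrow> ((\<lambda>x. adjoint (f x :: 'n::finite op)) has_vector_derivative adjoint f') F"
  by (rule bounded_linear.has_vector_derivative[OF bounded_linear_adjoint])

lemma has_vector_derivative_kron_mat_one:
  "(f has_vector_derivative f') F \<Longrightarrow>
    ((\<lambda>x. kron (f x :: 's::finite op) (mat 1 :: 'b::finite op)) has_vector_derivative kron f' (mat 1)) F"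
  by (rule bounded_linear.has_vector_derivative[OF bounded_linear_kron_mat_one])

lemma has_vector_derivative_cexp_linear:
  "((\<lambda>t. exp (a * complex_of_real t)) has_vector_derivative a * exp (a * complex_of_real t)) (at t within s)"
proof -
  have "((\<lambda>z. exp (a * z)) has_field_derivative exp (a * complex_of_real t) * a) (at (complex_of_real t))"
    by (auto intro!: derivative_eq_intros)
  from has_vector_derivative_real_field[OF this, where s = s] show ?thesis
    by (simp add: mult.commute)
qed

lemma evolution_derivative:
  "evolution T H U \<Longrightarrow> t \<in> {0..T} \<Longrightarrow>
    (U has_vector_derivative cmat_smult (- \<i>) (H t ** U t)) (at t within {0..T})"
  by (simp add: evolution_def)

lemma evolution_continuous: "evolution T H U \<Longrightarrow> continuous_on {0..T} U"
  unfolding evolution_def continuous_on_eq_continuous_within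
  by (blast intro: has_vector_derivative_continuous)

lemma constant_on_interval:
  assumes "\<And>t. t \<in> {0..T} \<Longrightarrow> (f has_vector_derivative 0) (at t within {0..T})" and "t \<in> {0..T}"
  shows "f t = f 0"
proof -
  obtain C where "\<And>x. x \<in> {0..T} \<Longrightarrow> f x = C"
    using has_vector_derivative_zero_constant[of "{0..T}" f] assms(1) by blast
  with assms(2) show ?thesis by force
qed

lemma evolution_unitary:
  assumes ev: "evolution T H U" and herm: "\<forall>t\<in>{0..T}. hermitian (H t)" and t: "t \<in> {0..T}"
  shows "unitary (U t)"
proof -
  have d: "((\<lambda>s. adjoint (U s) ** U s) has_vector_derivative 0) (at s within {0..T})"
    if s: "s \<in> {0..T}" for s
  proof -
    have "adjoint (U s) ** cmat_smult (- \<i>) (H s ** U s) + adjoint (cmat_smult (- \<i>) (H s ** U s)) ** U s = 0"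
      using herm s by (simp add: hermitian_def adjoint_cmat_smult adjoint_mult cmat_smult_mult_left
          cmat_smult_mult_right matrix_mul_assoc flip: cmat_smult_add_left)
    with has_vector_derivative_matrix_mult[OF has_vector_derivative_adjoint[OF evolution_derivative[OF ev s]]
        evolution_derivative[OF ev s]]
    show ?thesis by simp
  qed
  have "adjoint (U t) ** U t = mat 1"
    using constant_on_interval[of T "\<lambda>s. adjoint (U s) ** U s", OF d t] ev by (simp add: evolution_def)
  then show ?thesis unfolding unitary_def using matrix_left_right_inverse by blast
qed

lemma evolution_conjugate_derivative:
  assumes ev: "evolution T H U" and herm: "\<forall>t\<in>{0..T}. hermitian (H t)" and t: "t \<in> {0..T}"
  shows "((\<lambda>s. adjoint (U s) ** X ** U s) has_vector_derivative
      cmat_smult \<i> (adjoint (U t) ** (H t ** X - X ** H t) ** U t)) (at t within {0..T})"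
proof -
  have "((\<lambda>s. adjoint (U s) ** X ** U s) has_vector_derivative
      (adjoint (U t) ** X) ** cmat_smult (- \<i>) (H t ** U t)
      + (adjoint (U t) ** 0 + adjoint (cmat_smult (- \<i>) (H t ** U t)) ** X) ** U t) (at t within {0..T})"
    by (intro has_vector_derivative_matrix_mult has_vector_derivative_adjoint has_vector_derivative_const
        evolution_derivative[OF ev t])
  moreover have "(adjoint (U t) ** X) ** cmat_smult (- \<i>) (H t ** U t)
      + (adjoint (U t) ** 0 + adjoint (cmat_smult (- \<i>) (H t ** U t)) ** X) ** U t
      = cmat_smult \<i> (adjoint (U t) ** (H t ** X - X ** H t) ** U t)"
    using herm t by (simp add: hermitian_def adjoint_cmat_smult adjoint_mult cmat_smult_mult_left
        cmat_smult_mult_right matrix_mul_assoc matrix_diff_ldistrib matrix_diff_rdistrib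
        cmat_smult_diff_right cmat_smult_minus_left matrix_minus_left matrix_minus_right adjoint_minus)
  ultimately show ?thesis by simp
qed

lemma evolution_commute:
  assumes ev: "evolution T H U" and herm: "\<forall>t\<in>{0..T}. hermitian (H t)"
    and comm: "\<forall>t\<in>{0..T}. X ** H t = H t ** X" and t: "t \<in> {0..T}"
  shows "X ** U t = U t ** X"
proof -
  have d: "((\<lambda>s. adjoint (U s) ** X ** U s) has_vector_derivative 0) (at s within {0..T})"
    if s: "s \<in> {0..T}" for s
    using evolution_conjugate_derivative[OF ev herm s, of X] comm s by simp
  have "adjoint (U t) ** X ** U t = X"
    using constant_on_interval[of T "\<lambda>s. adjoint (U s) ** X ** U s", OF d t] ev
    by (simp add: evolution_def)
  then have "U t ** (adjoint (U t) ** X ** U t) = U t ** X" by simp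
  then show ?thesis
    using unitaryD(2)[OF evolution_unitary[OF ev herm t]] by (simp add: matrix_mul_assoc)
qed

lemma evolution_eigen:
  assumes ev: "evolution T H U"
    and eig: "\<forall>t\<in>{0..T}. X ** H t = cmat_smult (complex_of_real \<mu>) X" and t: "t \<in> {0..T}"
  shows "X ** U t = cmat_smult (exp (- \<i> * complex_of_real (\<mu> * t))) X"
proof -
  define e where "e s = exp (\<i> * complex_of_real \<mu> * complex_of_real s)" for s
  have d: "((\<lambda>s. cmat_smult (e s) (X ** U s)) has_vector_derivative 0) (at s within {0..T})"
    if s: "s \<in> {0..T}" for s
  proof -
    have "X ** (H s ** U s) = cmat_smult (complex_of_real \<mu>) (X ** U s)"
      using eig s by (simp add: matrix_mul_assoc cmat_smult_mult_left)
    then have "cmat_smult (e s) (X ** cmat_smult (- \<i>) (H s ** U s) + 0 ** U s)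
        + cmat_smult (\<i> * complex_of_real \<mu> * e s) (X ** U s) = 0"
      by (simp add: cmat_smult_mult_right cmat_smult_smult flip: cmat_smult_add_left)
    with has_vector_derivative_cmat_smult[OF has_vector_derivative_cexp_linear
        has_vector_derivative_matrix_mult[OF has_vector_derivative_const evolution_derivative[OF ev s]],
        of "\<i> * complex_of_real \<mu>" X]
    show ?thesis by (simp add: e_def)
  qed
  have "cmat_smult (e t) (X ** U t) = X"
    using constant_on_interval[of T "\<lambda>s. cmat_smult (e s) (X ** U s)", OF d t] ev
    by (simp add: evolution_def e_def)
  then have "cmat_smult (exp (- \<i> * complex_of_real (\<mu> * t))) (cmat_smult (e t) (X ** U t))
      = cmat_smult (exp (- \<i> * complex_of_real (\<mu> * t))) X" by simp
  moreover have "exp (- \<i> * complex_of_real (\<mu> * t)) * e t = 1"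
    by (simp add: e_def flip: exp_add)
  ultimately show ?thesis by (simp add: cmat_smult_smult)
qed

lemma evolution_mult:
  assumes ev1: "evolution T H1 U1" and ev2: "evolution T H2 U2"
    and comm: "\<forall>t\<in>{0..T}. H2 t ** U1 t = U1 t ** H2 t"
  shows "evolution T (\<lambda>t. H1 t + H2 t) (\<lambda>t. U1 t ** U2 t)"
  unfolding evolution_def
proof (intro conjI ballI)
  show "U1 0 ** U2 0 = mat 1" using ev1 ev2 by (simp add: evolution_def)
next
  fix t assume t: "t \<in> {0..T}"
  have "U1 t ** cmat_smult (- \<i>) (H2 t ** U2 t) + cmat_smult (- \<i>) (H1 t ** U1 t) ** U2 t
      = cmat_smult (- \<i>) ((H1 t + H2 t) ** (U1 t ** U2 t))"
    using comm t by (simp add: cmat_smult_mult_left cmat_smult_mult_right matrix_add_rdistrib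
        cmat_smult_add_right matrix_mul_assoc add.commute)
  with has_vector_derivative_matrix_mult[OF evolution_derivative[OF ev1 t] evolution_derivative[OF ev2 t]]
  show "((\<lambda>t. U1 t ** U2 t) has_vector_derivative
      cmat_smult (- \<i>) ((H1 t + H2 t) ** (U1 t ** U2 t))) (at t within {0..T})" by simp
qed

lemma evolution_phase:
  "evolution T (\<lambda>t. cmat_smult (complex_of_real c) (mat 1))
     (\<lambda>t. cmat_smult (exp (- \<i> * complex_of_real (c * t))) (mat 1 :: 'n::finite op))"
  unfolding evolution_def
proof (intro conjI ballI)
  fix t :: real
  have "((\<lambda>t. exp (- \<i> * complex_of_real c * complex_of_real t)) has_vector_derivative
      - \<i> * complex_of_real c * exp (- \<i> * complex_of_real c * complex_of_real t)) (at t within {0..T})"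
    by (rule has_vector_derivative_cexp_linear)
  from has_vector_derivative_cmat_smult[OF this has_vector_derivative_const, of "mat 1 :: 'n op"]
  show "((\<lambda>t. cmat_smult (exp (- \<i> * complex_of_real (c * t))) (mat 1 :: 'n op)) has_vector_derivative
      cmat_smult (- \<i>) (cmat_smult (complex_of_real c) (mat 1) **
        cmat_smult (exp (- \<i> * complex_of_real (c * t))) (mat 1))) (at t within {0..T})"
    by (simp add: cmat_smult_mult_left cmat_smult_smult mult.assoc)
qed simp

lemma evolution_kron_mat_one:
  "evolution T H U \<Longrightarrow>
    evolution T (\<lambda>t. kron (H t) (mat 1)) (\<lambda>t. kron (U t) (mat 1 :: 'b::finite op))"
  unfolding evolution_def
  by (auto intro!: has_vector_derivative_kron_mat_one[where 'b = 'b, THEN has_vector_derivative_eq_rhs]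
      simp: kron_cmat_smult_left kron_mult)

lemma evolution_interaction_picture:
  assumes evU: "evolution T (\<lambda>t. H t + D t) U" and hermU: "\<forall>t\<in>{0..T}. hermitian (H t + D t)"
    and evW: "evolution T H W" and hermW: "\<forall>t\<in>{0..T}. hermitian (H t)" and t: "t \<in> {0..T}"
  shows "((\<lambda>t. adjoint (U t) ** W t) has_vector_derivative
      cmat_smult \<i> ((adjoint (U t) ** W t) ** (adjoint (W t) ** D t ** W t))) (at t within {0..T})"
proof -
  have "adjoint (U t) ** cmat_smult (- \<i>) (H t ** W t)
      + adjoint (cmat_smult (- \<i>) ((H t + D t) ** U t)) ** W t
      = cmat_smult \<i> (adjoint (U t) ** D t ** W t)"
  proof -
    have "adjoint (cmat_smult (- \<i>) ((H t + D t) ** U t)) = cmat_smult \<i> (adjoint (U t) ** (H t + D t))"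
      using hermU t by (simp add: hermitian_def adjoint_cmat_smult adjoint_mult)
    then show ?thesis
      by (simp add: cmat_smult_mult_left cmat_smult_mult_right matrix_add_ldistrib matrix_add_rdistrib
          cmat_smult_add_right matrix_mul_assoc flip: cmat_smult_add_left)
  qed
  also have "adjoint (U t) ** D t ** W t = adjoint (U t) ** (W t ** adjoint (W t)) ** D t ** W t"
    using unitaryD(2)[OF evolution_unitary[OF evW hermW t]] by simp
  also have "\<dots> = (adjoint (U t) ** W t) ** (adjoint (W t) ** D t ** W t)"
    by (simp add: matrix_mul_assoc)
  finally show ?thesis
    using has_vector_derivative_matrix_mult[OF has_vector_derivative_adjoint[OF
          evolution_derivative[OF evU t]] evolution_derivative[OF evW t]] by simp
qed

section \<open>Spectral decompositions\<close>

context
  fixes H :: "'n::finite op" and Lam :: "real set" and Proj :: "real \<Rightarrow> 'n op"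
  assumes sd: "spectral_decomp H Lam Proj"
begin

lemma spectral_finite: "finite Lam"
  and spectral_proj_idem: "a \<in> Lam \<Longrightarrow> Proj a ** Proj a = Proj a"
  and spectral_proj_adjoint: "a \<in> Lam \<Longrightarrow> adjoint (Proj a) = Proj a"
  and spectral_proj_orthogonal: "a \<in> Lam \<Longrightarrow> b \<in> Lam \<Longrightarrow> a \<noteq> b \<Longrightarrow> Proj a ** Proj b = 0"
  and spectral_proj_sum: "(\<Sum>a\<in>Lam. Proj a) = mat 1"
  using sd by (simp_all add: spectral_decomp_def orth_proj_def hermitian_def)

lemma spectral_proj_mult:
  assumes "a \<in> Lam" and "b \<in> Lam"
  shows "Proj a ** Proj b = (if a = b then Proj a else 0)"
  using assms spectral_proj_idem spectral_proj_orthogonal by simp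

lemma spectral_proj_mult_left:
  assumes a: "a \<in> Lam"
  shows "Proj a ** H = cmat_smult (complex_of_real a) (Proj a)"
proof -
  have "Proj a ** H = (\<Sum>b\<in>Lam. cmat_smult (complex_of_real b) (Proj a ** Proj b))"
    using sd by (simp add: spectral_decomp_def matrix_sum_ldistrib cmat_smult_mult_right)
  also have "\<dots> = (\<Sum>b\<in>Lam. if b = a then cmat_smult (complex_of_real a) (Proj a) else 0)"
    using a by (intro sum.cong refl) (simp add: spectral_proj_mult)
  finally show ?thesis using a spectral_finite by simp
qed

lemma spectral_proj_mult_right:
  assumes a: "a \<in> Lam"
  shows "H ** Proj a = cmat_smult (complex_of_real a) (Proj a)"
proof -
  have "H ** Proj a = (\<Sum>b\<in>Lam. cmat_smult (complex_of_real b) (Proj b ** Proj a))"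
    using sd by (simp add: spectral_decomp_def matrix_sum_rdistrib cmat_smult_mult_left)
  also have "\<dots> = (\<Sum>b\<in>Lam. if b = a then cmat_smult (complex_of_real a) (Proj a) else 0)"
    using a by (intro sum.cong refl) (simp add: spectral_proj_mult)
  finally show ?thesis using a spectral_finite by simp
qed

text \<open>Whatever commutes with H maps each eigenspace into itself, since
  a * Proj b ** A ** Proj a = Proj b ** A ** H ** Proj a = b * Proj b ** A ** Proj a.\<close>

lemma spectral_proj_sandwich_zero:
  assumes comm: "A ** H = H ** A" and a: "a \<in> Lam" and b: "b \<in> Lam" and ab: "a \<noteq> b"
  shows "Proj b ** A ** Proj a = 0"
proof -
  have "Proj b ** A ** (H ** Proj a) = (Proj b ** H) ** A ** Proj a"
    using comm by (metis matrix_mul_assoc)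
  then have "cmat_smult (complex_of_real a) (Proj b ** A ** Proj a)
      = cmat_smult (complex_of_real b) (Proj b ** A ** Proj a)"
    by (simp add: spectral_proj_mult_left[OF b] spectral_proj_mult_right[OF a] cmat_smult_mult_left
        cmat_smult_mult_right)
  with ab show ?thesis by (auto simp: cmat_smult_def vec_eq_iff)
qed

lemma spectral_proj_commute:
  assumes comm: "A ** H = H ** A" and a: "a \<in> Lam"
  shows "A ** Proj a = Proj a ** A"
proof -
  have "(\<Sum>b\<in>Lam. Proj b ** A ** Proj a) = (\<Sum>b\<in>Lam. if b = a then Proj a ** A ** Proj a else 0)"
    by (rule sum.cong) (auto simp: spectral_proj_sandwich_zero[OF comm a])
  then have left: "(\<Sum>b\<in>Lam. Proj b ** A ** Proj a) = Proj a ** A ** Proj a"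
    using a spectral_finite by simp
  have "(\<Sum>b\<in>Lam. Proj a ** A ** Proj b) = (\<Sum>b\<in>Lam. if b = a then Proj a ** A ** Proj a else 0)"
    by (rule sum.cong) (auto simp: spectral_proj_sandwich_zero[OF comm _ a])
  then have right: "(\<Sum>b\<in>Lam. Proj a ** A ** Proj b) = Proj a ** A ** Proj a"
    using a spectral_finite by simp
  have "A ** Proj a = (\<Sum>b\<in>Lam. Proj b) ** A ** Proj a" by (simp add: spectral_proj_sum)
  also have "\<dots> = Proj a ** A ** (\<Sum>b\<in>Lam. Proj b)"
    by (simp only: matrix_sum_rdistrib matrix_sum_ldistrib left right)
  finally show ?thesis by (simp add: spectral_proj_sum)
qed

lemma evolution_spectral:
  assumes ev: "evolution T (\<lambda>t. cmat_smult (complex_of_real E) H) U" and t: "t \<in> {0..T}"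
  shows "U t = (\<Sum>a\<in>Lam. cmat_smult (exp (- \<i> * complex_of_real (E * a * t))) (Proj a))"
proof -
  have "Proj a ** U t = cmat_smult (exp (- \<i> * complex_of_real (E * a * t))) (Proj a)" if a: "a \<in> Lam" for a
    by (rule evolution_eigen[OF ev _ t])
      (simp add: cmat_smult_mult_right spectral_proj_mult_left[OF a] cmat_smult_smult mult.commute)
  then have "(\<Sum>a\<in>Lam. Proj a) ** U t = (\<Sum>a\<in>Lam. cmat_smult (exp (- \<i> * complex_of_real (E * a * t))) (Proj a))"
    by (simp add: matrix_sum_rdistrib)
  then show ?thesis by (simp add: spectral_proj_sum)
qed

end

lemma spectral_decomp_kron_mat_one:
  "spectral_decomp H Lam Proj \<Longrightarrow>
    spectral_decomp (kron H (mat 1)) Lam (\<lambda>a. kron (Proj a) (mat 1 :: 'b::finite op))"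
  by (simp add: spectral_decomp_def orth_proj_def hermitian_def adjoint_kron kron_mult kron_sum_left
      kron_cmat_smult_left flip: kron_sum_left[of _ _ "mat 1"])

lemma adjoint_sum_proj_sandwich:
  assumes "\<forall>a\<in>Lam. adjoint (Proj a) = Proj a"
  shows "adjoint (\<Sum>a\<in>Lam. cmat_smult (u a) (Proj a)) ** X ** (\<Sum>b\<in>Lam. cmat_smult (w b) (Proj b))
    = (\<Sum>(a, b)\<in>Lam \<times> Lam. cmat_smult (cnj (u a) * w b) (Proj a ** X ** Proj b))"
proof -
  have "adjoint (\<Sum>a\<in>Lam. cmat_smult (u a) (Proj a)) = (\<Sum>a\<in>Lam. cmat_smult (cnj (u a)) (Proj a))"
    using assms by (simp add: adjoint_sum adjoint_cmat_smult)
  then show ?thesis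
    by (simp only: matrix_sum_rdistrib)
      (simp add: matrix_sum_ldistrib cmat_smult_mult_left cmat_smult_mult_right cmat_smult_smult
        mult.commute flip: sum.cartesian_product)
qed

lemma sum_square_split_diagonal:
  assumes "finite A"
  shows "(\<Sum>p\<in>A \<times> A. f p) = (\<Sum>a\<in>A. f (a, a)) + (\<Sum>p\<in>A \<times> A - Id. f p)"
proof -
  have "A \<times> A \<inter> Id = (\<lambda>a. (a, a)) ` A" by auto
  then have "(\<Sum>p\<in>A \<times> A \<inter> Id. f p) = (\<Sum>a\<in>A. f (a, a))"
    by (simp add: sum.reindex inj_on_def)
  moreover have "A \<times> A - (A \<times> A \<inter> Id) = A \<times> A - Id" by blast
  ultimately show ?thesis
    using assms sum.subset_diff[of "A \<times> A \<inter> Id" "A \<times> A" f] by (simp add: add.commute)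
qed

section \<open>Averaging estimate\<close>

lemma norm_increment_le_derivative_bound:
  fixes f :: "real \<Rightarrow> 'a::real_normed_vector"
  assumes d: "\<And>t. t \<in> {0..T} \<Longrightarrow> (f has_vector_derivative f' t) (at t within {0..T})"
    and b: "\<And>t. t \<in> {0..T} \<Longrightarrow> norm (f' t) \<le> B" and T: "0 \<le> T"
  shows "norm (f T - f 0) \<le> B * T"
proof -
  have B: "0 \<le> B" using b[of 0] T by (simp add: order_trans[OF norm_ge_zero])
  have "norm (f T - f 0) \<le> B * norm (T - 0)"
  proof (rule differentiable_bound[of "{0..T}" f "\<lambda>t h. h *\<^sub>R f' t" B])
    show "\<And>x. x \<in> {0..T} \<Longrightarrow> (f has_derivative (\<lambda>h. h *\<^sub>R f' x)) (at x within {0..T})"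
      using d by (simp add: has_vector_derivative_def)
    show "\<And>x. x \<in> {0..T} \<Longrightarrow> onorm (\<lambda>h. h *\<^sub>R f' x) \<le> B"
      by (rule onorm_bound[OF B]) (use b in \<open>auto simp: mult.commute[of B] intro!: mult_left_mono\<close>)
  qed (use T in auto)
  then show ?thesis using T by simp
qed

lemma has_vector_derivative_averaging_correction:
  fixes \<Psi> F :: "real \<Rightarrow> 'n::finite op" and G D E P :: "'n op"
  assumes d\<Psi>: "(\<Psi> has_vector_derivative cmat_smult \<i> (\<Psi> t ** G)) (at t within S)"
    and dF: "(F has_vector_derivative D + E) (at t within S)"
    and GD: "G ** P = D ** P"
  shows "((\<lambda>t. \<Psi> t ** P - cmat_smult \<i> (\<Psi> t ** F t ** P)) has_vector_derivative
      \<Psi> t ** G ** F t ** P - cmat_smult \<i> (\<Psi> t ** E ** P)) (at t within S)"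
proof -
  have "((\<lambda>t. \<Psi> t ** P - cmat_smult \<i> (\<Psi> t ** F t ** P)) has_vector_derivative
      (\<Psi> t ** 0 + cmat_smult \<i> (\<Psi> t ** G) ** P)
      - cmat_smult \<i> ((\<Psi> t ** F t) ** 0 + (\<Psi> t ** (D + E) + cmat_smult \<i> (\<Psi> t ** G) ** F t) ** P))
      (at t within S)"
    by (intro has_vector_derivative_diff has_vector_derivative_matrix_mult
        has_vector_derivative_cmat_smult_right has_vector_derivative_const d\<Psi> dF)
  moreover have "\<Psi> t ** G ** P = \<Psi> t ** D ** P"
    using GD by (simp flip: matrix_mul_assoc)
  ultimately show ?thesis
    by (simp add: cmat_smult_mult_left cmat_smult_mult_right matrix_add_ldistrib matrix_add_rdistrib
        cmat_smult_add_right cmat_smult_smult matrix_mul_assoc)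
qed

text \<open>The proof
  integrates by parts: Y = Psi P - i Psi F P has derivative Psi Vt F P - i Psi R P.\<close>

lemma averaging_estimate:
  fixes \<Psi> Vt F Off R :: "real \<Rightarrow> 'n::finite op" and P :: "'n op"
  assumes T: "0 \<le> T"
    and d\<Psi>: "\<And>t. t \<in> {0..T} \<Longrightarrow> (\<Psi> has_vector_derivative cmat_smult \<i> (\<Psi> t ** Vt t)) (at t within {0..T})"
    and dF: "\<And>t. t \<in> {0..T} \<Longrightarrow> (F has_vector_derivative Off t + R t) (at t within {0..T})"
    and Off: "\<And>t. t \<in> {0..T} \<Longrightarrow> Vt t ** P = Off t ** P"
    and \<Psi>0: "\<Psi> 0 = mat 1"
    and bounds: "\<And>t. t \<in> {0..T} \<Longrightarrow> norm (\<Psi> t) \<le> a \<and> norm (Vt t) \<le> v \<and> norm (F t) \<le> f \<and> norm (R t) \<le> r"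
  shows "norm (\<Psi> T ** P - P) \<le> (T * (a * v * f + a * r) + a * f + f) * norm P"
proof -
  define Y where "Y t = \<Psi> t ** P - cmat_smult \<i> (\<Psi> t ** F t ** P)" for t
  define Y' where "Y' t = \<Psi> t ** Vt t ** F t ** P - cmat_smult \<i> (\<Psi> t ** R t ** P)" for t
  have dY: "(Y has_vector_derivative Y' t) (at t within {0..T})" if t: "t \<in> {0..T}" for t
    unfolding Y_def[abs_def] Y'_def
    by (rule has_vector_derivative_averaging_correction[OF d\<Psi>[OF t] dF[OF t] Off[OF t]])
  have "norm (Y' t) \<le> (a * v * f + a * r) * norm P" if t: "t \<in> {0..T}" for t
  proof -
    have b: "norm (\<Psi> t) \<le> a" "norm (Vt t) \<le> v" "norm (F t) \<le> f" "norm (R t) \<le> r"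
      using bounds[OF t] by auto
    have "norm (\<Psi> t ** Vt t ** F t ** P) \<le> a * v * f * norm P"
      by (rule norm_matrix_mult_bound[OF norm_matrix_mult_bound[OF norm_matrix_mult_bound[OF b(1,2)] b(3)] order_refl])
    moreover have "norm (cmat_smult \<i> (\<Psi> t ** R t ** P)) \<le> a * r * norm P"
      unfolding norm_cmat_smult
      using norm_matrix_mult_bound[OF norm_matrix_mult_bound[OF b(1,4)] order_refl] by simp
    ultimately show ?thesis
      unfolding Y'_def distrib_right by (rule order_trans[OF norm_triangle_ineq4 add_mono])
  qed
  then have "norm (Y T - Y 0) \<le> (a * v * f + a * r) * norm P * T"
    by (intro norm_increment_le_derivative_bound[OF dY _ T])
  moreover have "norm (\<Psi> T ** P - P) \<le> norm (Y T - Y 0) + norm (cmat_smult \<i> (\<Psi> T ** F T ** P))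
      + norm (cmat_smult \<i> (F 0 ** P))"
  proof -
    have eq: "\<Psi> T ** P - P = (Y T - Y 0) + cmat_smult \<i> (\<Psi> T ** F T ** P) - cmat_smult \<i> (F 0 ** P)"
      by (simp add: Y_def \<Psi>0)
    show ?thesis
      unfolding eq
      using norm_triangle_ineq4[of "(Y T - Y 0) + cmat_smult \<i> (\<Psi> T ** F T ** P)" "cmat_smult \<i> (F 0 ** P)"]
        norm_triangle_ineq[of "Y T - Y 0" "cmat_smult \<i> (\<Psi> T ** F T ** P)"] by linarith
  qed
  moreover have "norm (\<Psi> T) \<le> a" "norm (F T) \<le> f" "norm (F 0) \<le> f"
    using bounds T by auto
  then have "norm (cmat_smult \<i> (\<Psi> T ** F T ** P)) \<le> a * f * norm P"
    and "norm (cmat_smult \<i> (F 0 ** P)) \<le> f * norm P"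
    unfolding norm_cmat_smult
    using norm_matrix_mult_bound[OF norm_matrix_mult_bound order_refl] norm_matrix_mult_bound[OF _ order_refl]
    by simp_all
  moreover have "(T * (a * v * f + a * r) + a * f + f) * norm P
      = (a * v * f + a * r) * norm P * T + a * f * norm P + f * norm P"
    by (simp add: algebra_simps)
  ultimately show ?thesis by linarith
qed

lemma has_vector_derivative_oscillating_sum:
  fixes \<omega> :: "'i \<Rightarrow> real" and M :: "'i \<Rightarrow> real \<Rightarrow> 'n::finite op" and M' :: "'i \<Rightarrow> 'n op"
  assumes \<omega>: "\<And>k. k \<in> S \<Longrightarrow> \<omega> k \<noteq> 0"
    and M: "\<And>k. k \<in> S \<Longrightarrow> (M k has_vector_derivative M' k) (at t within X)"
  shows "((\<lambda>t. \<Sum>k\<in>S. cmat_smult (exp (\<i> * of_real (\<omega> k * t)) / (\<i> * of_real (\<omega> k))) (M k t))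
      has_vector_derivative
        (\<Sum>k\<in>S. cmat_smult (exp (\<i> * of_real (\<omega> k * t))) (M k t))
      + (\<Sum>k\<in>S. cmat_smult (exp (\<i> * of_real (\<omega> k * t)) / (\<i> * of_real (\<omega> k))) (M' k)))
      (at t within X)"
proof -
  have "((\<lambda>t. cmat_smult (exp (\<i> * of_real (\<omega> k * t)) / (\<i> * of_real (\<omega> k))) (M k t))
      has_vector_derivative
        cmat_smult (exp (\<i> * of_real (\<omega> k * t))) (M k t)
      + cmat_smult (exp (\<i> * of_real (\<omega> k * t)) / (\<i> * of_real (\<omega> k))) (M' k)) (at t within X)"
    if k: "k \<in> S" for k
  proof -
    have "((\<lambda>t. exp (\<i> * of_real (\<omega> k) * of_real t) / (\<i> * of_real (\<omega> k))) has_vector_derivative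
        \<i> * of_real (\<omega> k) * exp (\<i> * of_real (\<omega> k) * of_real t) / (\<i> * of_real (\<omega> k))) (at t within X)"
      by (rule bounded_linear.has_vector_derivative[OF bounded_linear_divide has_vector_derivative_cexp_linear])
    then have "((\<lambda>t. exp (\<i> * of_real (\<omega> k * t)) / (\<i> * of_real (\<omega> k))) has_vector_derivative
        exp (\<i> * of_real (\<omega> k * t))) (at t within X)"
      using \<omega>[OF k] by (simp add: mult.assoc)
    from has_vector_derivative_cmat_smult[OF this M[OF k]] show ?thesis by (simp add: add.commute)
  qed
  then show ?thesis
    by (simp add: sum.distrib[symmetric] has_vector_derivative_sum)
qed

lemma norm_oscillating_sum_le:
  fixes \<omega> :: "'i \<Rightarrow> real" and M :: "'i \<Rightarrow> 'n::finite op"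
  shows "norm (\<Sum>k\<in>S. cmat_smult (exp (\<i> * of_real (\<omega> k * t)) / (\<i> * of_real (\<omega> k))) (M k))
    \<le> (\<Sum>k\<in>S. norm (M k) / \<bar>\<omega> k\<bar>)"
  by (rule order_trans[OF norm_sum sum_mono]) (simp add: norm_cmat_smult norm_divide norm_mult)

section \<open>Unitarily invariant norms\<close>

context
  fixes N :: "'n::finite op \<Rightarrow> real"
  assumes N: "unitarily_invariant_norm N"
begin

lemma unitarily_invariant_norm_zero: "N 0 = 0"
  and unitarily_invariant_norm_triangle: "N (X + Y) \<le> N X + N Y"
  and unitarily_invariant_norm_cmat_smult: "N (cmat_smult c X) = cmod c * N X"
  and unitarily_invariant_norm_unitary: "unitary U \<Longrightarrow> unitary V \<Longrightarrow> N (U ** X ** V) = N X"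
  using N unfolding unitarily_invariant_norm_def by blast+

lemma unitarily_invariant_norm_nonneg: "0 \<le> N X"
  using unitarily_invariant_norm_triangle[of X "- X"] unitarily_invariant_norm_cmat_smult[of "- 1" X]
  by (simp add: unitarily_invariant_norm_zero)

lemma unitarily_invariant_norm_sum_le: "N (\<Sum>i\<in>S. f i) \<le> (\<Sum>i\<in>S. N (f i))"
proof (induct S rule: infinite_finite_induct)
  case (insert x F)
  have "N (f x + sum f F) \<le> N (f x) + N (sum f F)" by (rule unitarily_invariant_norm_triangle)
  with insert show ?case by simp
qed (simp_all add: unitarily_invariant_norm_zero)

lemma unitarily_invariant_norm_le_norm: "N X \<le> (\<Sum>b\<in>Basis. N b) * norm X"
proof -
  have "N X = N (\<Sum>b\<in>Basis. (X \<bullet> b) *\<^sub>R b)" by (simp add: euclidean_representation)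
  also have "\<dots> \<le> (\<Sum>b\<in>Basis. \<bar>X \<bullet> b\<bar> * N b)"
    by (rule order_trans[OF unitarily_invariant_norm_sum_le])
      (simp add: scaleR_eq_cmat_smult unitarily_invariant_norm_cmat_smult)
  also have "\<dots> \<le> (\<Sum>b\<in>Basis. N b * norm X)"
    by (rule sum_mono) (simp add: mult.commute mult_left_mono Basis_le_norm unitarily_invariant_norm_nonneg)
  finally show ?thesis by (simp add: sum_distrib_right)
qed

lemma unitarily_invariant_norm_unitary_left: "unitary U \<Longrightarrow> N (U ** X) = N X"
  using unitarily_invariant_norm_unitary[of U "mat 1" X] by (simp add: unitary_def)

end

section \<open>The penalty setting\<close>

locale penalty_setting =
  fixes T c :: real
    and HS :: "real \<Rightarrow> 's::finite op" and HB :: "'b::finite op"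
    and Hp :: "'s op" and Lam :: "real set" and Proj :: "real \<Rightarrow> 's op"
    and V :: "('s \<times> 'b) op" and P :: "'s op"
    and U0 :: "real \<Rightarrow> ('s \<times> 'b) op"
  assumes T_nonneg: "0 \<le> T"
    and HS_cont: "continuous_on {0..T} HS"
    and HS_herm: "\<forall>t\<in>{0..T}. hermitian (HS t)"
    and HB_herm: "hermitian HB"
    and Hp_herm: "hermitian Hp"
    and Hp_spec: "spectral_decomp Hp Lam Proj"
    and V_herm: "hermitian V"
    and comm_P: "\<forall>t\<in>{0..T}. HS t ** P = P ** HS t"
    and comm_Hp: "\<forall>t\<in>{0..T}. HS t ** Hp = Hp ** HS t"
    and pinch: "(\<Sum>a\<in>Lam. kron (Proj a) (mat 1) ** V ** kron (Proj a) (mat 1)) ** kron P (mat 1)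
                 = cmat_smult (complex_of_real c) (kron P (mat 1))"
    and U0_evol: "evolution T (\<lambda>t. kron (HS t) (mat 1) + kron (mat 1) HB) U0"
begin

abbreviation H0 :: "real \<Rightarrow> ('s \<times> 'b) op" where "H0 t \<equiv> kron (HS t) (mat 1) + kron (mat 1) HB"
abbreviation Pr :: "real \<Rightarrow> ('s \<times> 'b) op" where "Pr a \<equiv> kron (Proj a) (mat 1)"
abbreviation PI :: "('s \<times> 'b) op" where "PI \<equiv> kron P (mat 1)"
abbreviation Vc :: "('s \<times> 'b) op" where "Vc \<equiv> V - cmat_smult (complex_of_real c) (mat 1)"

definition Vint :: "real \<Rightarrow> ('s \<times> 'b) op" where
  "Vint t = adjoint (U0 t) ** Vc ** U0 t"

definition Vint' :: "real \<Rightarrow> ('s \<times> 'b) op" where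
  "Vint' t = cmat_smult \<i> (adjoint (U0 t) ** (H0 t ** Vc - Vc ** H0 t) ** U0 t)"

definition block :: "(real \<Rightarrow> ('s \<times> 'b) op) \<Rightarrow> real \<times> real \<Rightarrow> real \<Rightarrow> ('s \<times> 'b) op" where
  "block M k t = Pr (fst k) ** M t ** Pr (snd k)"

definition offdiag_sum :: "(real \<Rightarrow> ('s \<times> 'b) op) \<Rightarrow> real \<Rightarrow> real" where
  "offdiag_sum M t = (\<Sum>k\<in>Lam \<times> Lam - Id. norm (block M k t) / \<bar>fst k - snd k\<bar>)"

definition deviation_constant :: "real \<Rightarrow> real \<Rightarrow> real" where
  "deviation_constant KF KR =
    (let n = real CARD('s \<times> 'b) in (T * (n * (n * norm Vc) * KF + n * KR) + n * KF + KF) * norm PI)"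

lemma block_derivative:
  assumes "(M has_vector_derivative M' t) (at t within S)"
  shows "(block M k has_vector_derivative block M' k t) (at t within S)"
  using has_vector_derivative_matrix_mult[OF has_vector_derivative_matrix_mult[OF
      has_vector_derivative_const assms] has_vector_derivative_const, of "Pr (fst k)" "Pr (snd k)"]
  by (simp add: block_def[abs_def])

lemma H0_hermitian: "t \<in> {0..T} \<Longrightarrow> hermitian (H0 t)"
  using HS_herm HB_herm by (simp add: hermitian_add hermitian_kron hermitian_mat_one)

lemma U0_unitary: "t \<in> {0..T} \<Longrightarrow> unitary (U0 t)"
  by (rule evolution_unitary[OF U0_evol]) (simp add: H0_hermitian)

lemma U0_commute:
  assumes "\<forall>t\<in>{0..T}. HS t ** X = X ** HS t" and "t \<in> {0..T}"
  shows "kron X (mat 1) ** U0 t = U0 t ** kron X (mat 1)"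
  by (rule evolution_commute[OF U0_evol]) (use assms H0_hermitian in \<open>auto intro: kron_commute_hamiltonian\<close>)

lemma Pr_spectral: "spectral_decomp (kron Hp (mat 1)) Lam Pr"
  by (rule spectral_decomp_kron_mat_one[OF Hp_spec])

lemma Pr_commute_U0: "a \<in> Lam \<Longrightarrow> t \<in> {0..T} \<Longrightarrow> Pr a ** U0 t = U0 t ** Pr a"
  using spectral_proj_commute[OF Hp_spec] comm_Hp by (intro U0_commute) auto

lemma Vint_derivative: "t \<in> {0..T} \<Longrightarrow> (Vint has_vector_derivative Vint' t) (at t within {0..T})"
  unfolding Vint_def[abs_def] Vint'_def
  by (rule evolution_conjugate_derivative[OF U0_evol]) (simp_all add: H0_hermitian)

lemma Vint_continuous: "continuous_on {0..T} Vint"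
  unfolding Vint_def
  by (intro continuous_on_matrix_mult continuous_on_adjoint continuous_on_const
      evolution_continuous[OF U0_evol])

lemma Vint'_continuous: "continuous_on {0..T} Vint'"
proof -
  have H0: "continuous_on {0..T} H0"
    by (intro continuous_on_add continuous_on_const continuous_on_kron_mat_one HS_cont)
  have "continuous_on {0..T} (\<lambda>t. adjoint (U0 t) ** (H0 t ** Vc - Vc ** H0 t) ** U0 t)"
    by (intro continuous_on_matrix_mult continuous_on_adjoint continuous_on_diff continuous_on_const H0
        evolution_continuous[OF U0_evol])
  then show ?thesis
    unfolding Vint'_def
    by (rule bounded_linear.continuous_on[OF bounded_bilinear.bounded_linear_right[OF bounded_bilinear_cmat_smult]])
qed

lemma offdiag_sum_bounded:
  assumes M: "continuous_on {0..T} M"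
  obtains K where "\<And>t. t \<in> {0..T} \<Longrightarrow> offdiag_sum M t \<le> K"
proof -
  have "continuous_on {0..T} (\<lambda>t. norm (block M k t) / \<bar>fst k - snd k\<bar>)" if "k \<in> Lam \<times> Lam - Id" for k
    unfolding block_def using that
    by (intro continuous_on_divide continuous_on_norm continuous_on_matrix_mult continuous_on_const M)
      (auto simp: prod_eq_iff)
  then have "continuous_on {0..T} (offdiag_sum M)"
    unfolding offdiag_sum_def by (rule continuous_on_sum)
  then have "bounded (offdiag_sum M ` {0..T})"
    by (rule compact_imp_bounded[OF compact_continuous_image[OF _ compact_Icc]])
  then obtain K where "\<forall>t\<in>{0..T}. \<bar>offdiag_sum M t\<bar> \<le> K" by (auto simp: bounded_iff)
  then show ?thesis using that abs_le_D1 by blast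
qed

text \<open>The hypothesis on the pinching of V says exactly that the diagonal blocks of the
  perturbation V - c annihilate the range of P; conjugation by U0 preserves this, because U0
  commutes with P and with the spectral projectors of Hp.\<close>

lemma diagonal_blocks_Vint: "t \<in> {0..T} \<Longrightarrow> (\<Sum>a\<in>Lam. Pr a ** Vint t ** Pr a) ** PI = 0"
proof -
  assume t: "t \<in> {0..T}"
  have PI_U0: "PI ** U0 t = U0 t ** PI" using comm_P t by (intro U0_commute) auto
  have "Pr a ** Vint t ** Pr a ** PI = adjoint (U0 t) ** (Pr a ** Vc ** Pr a ** PI) ** U0 t"
    if a: "a \<in> Lam" for a
  proof -
    have "Pr a ** Vint t ** Pr a ** PI = (Pr a ** adjoint (U0 t)) ** Vc ** (U0 t ** Pr a) ** PI"
      by (simp add: Vint_def matrix_mul_assoc)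
    also have "\<dots> = adjoint (U0 t) ** Pr a ** Vc ** Pr a ** (U0 t ** PI)"
      by (simp only: unitary_commute_adjoint[OF U0_unitary[OF t] Pr_commute_U0[OF a t]]
          Pr_commute_U0[OF a t, symmetric]) (simp add: matrix_mul_assoc)
    also have "\<dots> = adjoint (U0 t) ** (Pr a ** Vc ** Pr a ** PI) ** U0 t"
      by (simp only: PI_U0[symmetric]) (simp add: matrix_mul_assoc)
    finally show ?thesis .
  qed
  then have "(\<Sum>a\<in>Lam. Pr a ** Vint t ** Pr a) ** PI
      = adjoint (U0 t) ** ((\<Sum>a\<in>Lam. Pr a ** Vc ** Pr a) ** PI) ** U0 t"
    by (simp add: matrix_sum_rdistrib matrix_sum_ldistrib)
  also have "(\<Sum>a\<in>Lam. Pr a ** Vc ** Pr a) ** PI = 0"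
    using pinch spectral_proj_idem[OF Pr_spectral] spectral_proj_sum[OF Pr_spectral]
    by (simp add: matrix_diff_ldistrib matrix_diff_rdistrib cmat_smult_mult_left cmat_smult_mult_right
        sum_subtractf matrix_sum_rdistrib flip: cmat_smult_sum)
  finally show ?thesis by simp
qed

end

locale penalty_evolution = penalty_setting T c HS HB Hp Lam Proj V P U0
  for T c :: real and HS :: "real \<Rightarrow> 's::finite op" and HB :: "'b::finite op"
    and Hp Lam Proj V P U0 +
  fixes Ep :: real and Up :: "real \<Rightarrow> 's op" and UV :: "real \<Rightarrow> ('s \<times> 'b) op"
  assumes Ep_pos: "0 < Ep"
    and Up_evol: "evolution T (\<lambda>t. cmat_smult (complex_of_real Ep) Hp) Up"
    and UV_evol: "evolution T (\<lambda>t. kron (HS t) (mat 1) + kron (mat 1) HB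
                   + kron (cmat_smult (complex_of_real Ep) Hp) (mat 1) + V) UV"
begin

abbreviation Upk :: "real \<Rightarrow> ('s \<times> 'b) op" where "Upk t \<equiv> kron (Up t) (mat 1)"
abbreviation Hw :: "real \<Rightarrow> ('s \<times> 'b) op" where
  "Hw t \<equiv> cmat_smult (complex_of_real c) (mat 1) + (H0 t + kron (cmat_smult (complex_of_real Ep) Hp) (mat 1))"

definition W :: "real \<Rightarrow> ('s \<times> 'b) op" where
  "W t = cmat_smult (exp (- \<i> * complex_of_real (c * t))) (U0 t ** Upk t)"

definition \<Psi> :: "real \<Rightarrow> ('s \<times> 'b) op" where "\<Psi> t = adjoint (UV t) ** W t"

abbreviation Vw :: "real \<Rightarrow> ('s \<times> 'b) op" where "Vw t \<equiv> adjoint (W t) ** Vc ** W t"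

definition \<omega> :: "real \<times> real \<Rightarrow> real" where "\<omega> k = Ep * (fst k - snd k)"

definition Off :: "real \<Rightarrow> ('s \<times> 'b) op" where
  "Off t = (\<Sum>k\<in>Lam \<times> Lam - Id. cmat_smult (exp (\<i> * of_real (\<omega> k * t))) (block Vint k t))"

definition F :: "real \<Rightarrow> ('s \<times> 'b) op" where
  "F t = (\<Sum>k\<in>Lam \<times> Lam - Id.
     cmat_smult (exp (\<i> * of_real (\<omega> k * t)) / (\<i> * of_real (\<omega> k))) (block Vint k t))"

definition R :: "real \<Rightarrow> ('s \<times> 'b) op" where
  "R t = (\<Sum>k\<in>Lam \<times> Lam - Id.
     cmat_smult (exp (\<i> * of_real (\<omega> k * t)) / (\<i> * of_real (\<omega> k))) (block Vint' k t))"

lemma Hw_hermitian: "t \<in> {0..T} \<Longrightarrow> hermitian (Hw t)"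
  using H0_hermitian Hp_herm
  by (simp add: hermitian_add hermitian_kron hermitian_mat_one hermitian_cmat_smult_real)

lemma UV_hamiltonian:
  "(\<lambda>t. kron (HS t) (mat 1) + kron (mat 1) HB + kron (cmat_smult (complex_of_real Ep) Hp) (mat 1) + V)
    = (\<lambda>t. Hw t + Vc)"
  by (simp add: fun_eq_iff algebra_simps)

lemma UV_hermitian: "t \<in> {0..T} \<Longrightarrow> hermitian (Hw t + Vc)"
proof -
  assume "t \<in> {0..T}"
  then have "hermitian (kron (HS t) (mat 1) + kron (mat 1) HB + kron (cmat_smult (complex_of_real Ep) Hp) (mat 1) + V)"
    using H0_hermitian Hp_herm V_herm
    by (simp add: hermitian_add hermitian_kron hermitian_mat_one hermitian_cmat_smult_real)
  then show ?thesis by (simp add: UV_hamiltonian[THEN fun_cong])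
qed

lemma Upk_evolution: "evolution T (\<lambda>t. cmat_smult (complex_of_real Ep) (kron Hp (mat 1))) Upk"
  using evolution_kron_mat_one[OF Up_evol, where 'b = 'b] by (simp add: kron_cmat_smult_left)

lemma W_evolution: "evolution T Hw W"
proof -
  have "kron (cmat_smult (complex_of_real Ep) Hp) (mat 1) ** U0 t = U0 t ** kron (cmat_smult (complex_of_real Ep) Hp) (mat 1)"
    if "t \<in> {0..T}" for t
    using U0_commute[of Hp t] comm_Hp that
    by (simp add: kron_cmat_smult_left cmat_smult_mult_left cmat_smult_mult_right)
  then have "evolution T (\<lambda>t. H0 t + kron (cmat_smult (complex_of_real Ep) Hp) (mat 1)) (\<lambda>t. U0 t ** Upk t)"
    using evolution_mult[OF U0_evol evolution_kron_mat_one[OF Up_evol]] by blast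
  from evolution_mult[OF evolution_phase this] show ?thesis
    by (simp add: W_def[abs_def] cmat_smult_mat_one_commute cmat_smult_mult_left)
qed

lemma W_unitary: "t \<in> {0..T} \<Longrightarrow> unitary (W t)"
  by (rule evolution_unitary[OF W_evolution]) (simp add: Hw_hermitian)

lemma UV_unitary: "t \<in> {0..T} \<Longrightarrow> unitary (UV t)"
  by (rule evolution_unitary[OF UV_evol[unfolded UV_hamiltonian]]) (use UV_hermitian in blast)

lemma \<Psi>_derivative:
  "t \<in> {0..T} \<Longrightarrow> (\<Psi> has_vector_derivative cmat_smult \<i> (\<Psi> t ** Vw t)) (at t within {0..T})"
  unfolding \<Psi>_def[abs_def]
  by (rule evolution_interaction_picture[OF UV_evol[unfolded UV_hamiltonian] _ W_evolution])
    (use UV_hermitian Hw_hermitian in blast)+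

lemma \<Psi>_zero: "\<Psi> 0 = mat 1"
  using UV_evol U0_evol Up_evol by (simp add: \<Psi>_def W_def evolution_def)

lemma Upk_expansion:
  "t \<in> {0..T} \<Longrightarrow> Upk t = (\<Sum>a\<in>Lam. cmat_smult (exp (- \<i> * complex_of_real (Ep * a * t))) (Pr a))"
  by (rule evolution_spectral[OF Pr_spectral Upk_evolution])

lemma Vw_eq_conjugate: "Vw t = adjoint (Upk t) ** Vint t ** Upk t"
proof -
  have "cnj (exp (- \<i> * complex_of_real (c * t))) * exp (- \<i> * complex_of_real (c * t)) = 1"
    by (simp add: exp_cnj flip: exp_add)
  then show ?thesis
    by (simp add: W_def Vint_def adjoint_cmat_smult adjoint_mult cmat_smult_mult_left cmat_smult_mult_right
        cmat_smult_smult matrix_mul_assoc mult.commute)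
qed

lemma Vw_expansion:
  assumes t: "t \<in> {0..T}"
  shows "Vw t = (\<Sum>k\<in>Lam \<times> Lam. cmat_smult (exp (\<i> * of_real (\<omega> k * t))) (block Vint k t))"
proof -
  have coef: "cnj (exp (- \<i> * complex_of_real (Ep * a * t))) * exp (- \<i> * complex_of_real (Ep * b * t))
      = exp (\<i> * of_real (\<omega> (a, b) * t))" for a b
    by (simp add: \<omega>_def exp_cnj algebra_simps flip: exp_add)
  have "(case k of (a, b) \<Rightarrow> cmat_smult (cnj (exp (- \<i> * complex_of_real (Ep * a * t)))
        * exp (- \<i> * complex_of_real (Ep * b * t))) (Pr a ** Vint t ** Pr b))
      = cmat_smult (exp (\<i> * of_real (\<omega> k * t))) (block Vint k t)" for k
    by (cases k) (simp only: coef block_def fst_conv snd_conv case_prod_conv)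
  then show ?thesis
    unfolding Vw_eq_conjugate Upk_expansion[OF t]
    by (subst adjoint_sum_proj_sandwich) (simp_all add: spectral_proj_adjoint[OF Pr_spectral])
qed

lemma Vw_PI: "t \<in> {0..T} \<Longrightarrow> Vw t ** PI = Off t ** PI"
proof -
  assume t: "t \<in> {0..T}"
  have "Vw t = (\<Sum>a\<in>Lam. Pr a ** Vint t ** Pr a) + Off t"
    unfolding Vw_expansion[OF t] Off_def
    by (subst sum_square_split_diagonal[OF spectral_finite[OF Hp_spec]]) (simp add: \<omega>_def block_def)
  then show ?thesis
    using diagonal_blocks_Vint[OF t] by (simp add: matrix_add_rdistrib)
qed

lemma F_derivative:
  assumes t: "t \<in> {0..T}"
  shows "(F has_vector_derivative Off t + R t) (at t within {0..T})"
  using Ep_pos block_derivative[of Vint Vint' t, OF Vint_derivative[OF t]] unfolding F_def[abs_def] Off_def R_def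
  by (intro has_vector_derivative_oscillating_sum) (auto simp: \<omega>_def)

lemma norm_oscillating_blocks_le:
  "norm (\<Sum>k\<in>Lam \<times> Lam - Id. cmat_smult (exp (\<i> * of_real (\<omega> k * t)) / (\<i> * of_real (\<omega> k))) (block M k t))
    \<le> offdiag_sum M t / Ep"
proof -
  have "\<bar>\<omega> k\<bar> = \<bar>fst k - snd k\<bar> * Ep" for k
    using Ep_pos by (simp add: \<omega>_def abs_mult)
  then have "offdiag_sum M t / Ep = (\<Sum>k\<in>Lam \<times> Lam - Id. norm (block M k t) / \<bar>\<omega> k\<bar>)"
    by (simp add: offdiag_sum_def sum_divide_distrib)
  then show ?thesis by (simp only: norm_oscillating_sum_le)
qed

lemma norm_\<Psi>_le: "t \<in> {0..T} \<Longrightarrow> norm (\<Psi> t) \<le> real CARD('s \<times> 'b)"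
  unfolding \<Psi>_def
  using norm_matrix_mult_bound[of "adjoint (UV t)" "sqrt (real CARD('s \<times> 'b))" "W t" "sqrt (real CARD('s \<times> 'b))"]
  by (simp add: norm_unitary unitary_adjoint UV_unitary W_unitary)

lemma norm_Vw_le: "t \<in> {0..T} \<Longrightarrow> norm (Vw t) \<le> real CARD('s \<times> 'b) * norm Vc"
proof -
  assume t: "t \<in> {0..T}"
  define n where "n = real CARD('s \<times> 'b)"
  have "norm (Vw t) \<le> sqrt n * norm Vc * sqrt n"
    by (intro norm_matrix_mult_bound order_refl)
      (simp_all add: n_def norm_unitary unitary_adjoint W_unitary[OF t])
  also have "\<dots> = n * norm Vc"
    using real_sqrt_mult_self[of n] by (simp add: n_def mult.commute mult.left_commute)
  finally show ?thesis by (simp add: n_def)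
qed

lemma norm_deviation_le:
  assumes KF: "\<And>t. t \<in> {0..T} \<Longrightarrow> offdiag_sum Vint t \<le> KF"
    and KR: "\<And>t. t \<in> {0..T} \<Longrightarrow> offdiag_sum Vint' t \<le> KR"
  shows "norm (\<Psi> T ** PI - PI) \<le> deviation_constant KF KR / Ep"
proof -
  let ?n = "real CARD('s \<times> 'b)"
  have "norm (F t) \<le> KF / Ep" "norm (R t) \<le> KR / Ep" if "t \<in> {0..T}" for t
    using norm_oscillating_blocks_le[of t] KF[OF that] KR[OF that] Ep_pos unfolding F_def R_def
    by (meson divide_right_mono less_imp_le order_trans)+
  then have "norm (\<Psi> T ** PI - PI)
      \<le> (T * (?n * (?n * norm Vc) * (KF / Ep) + ?n * (KR / Ep)) + ?n * (KF / Ep) + KF / Ep) * norm PI"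
    using norm_\<Psi>_le norm_Vw_le
    by (intro averaging_estimate[OF T_nonneg \<Psi>_derivative F_derivative Vw_PI \<Psi>_zero]) auto
  also have "\<dots> = deviation_constant KF KR / Ep"
    using Ep_pos by (simp add: deviation_constant_def Let_def field_simps)
  finally show ?thesis .
qed

lemma norm_deviation_unitarily_invariant_le:
  assumes N: "unitarily_invariant_norm N"
    and KF: "\<And>t. t \<in> {0..T} \<Longrightarrow> offdiag_sum Vint t \<le> KF"
    and KR: "\<And>t. t \<in> {0..T} \<Longrightarrow> offdiag_sum Vint' t \<le> KR"
  shows "N (UV T ** PI - W T ** PI) \<le> (\<Sum>b\<in>Basis. N b) * (deviation_constant KF KR / Ep)"
proof -
  have T: "T \<in> {0..T}" using T_nonneg by simp
  have "UV T ** PI - W T ** PI = UV T ** (PI - \<Psi> T ** PI)"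
    using unitaryD(2)[OF UV_unitary[OF T]] by (simp add: \<Psi>_def matrix_diff_ldistrib matrix_mul_assoc)
  then have "N (UV T ** PI - W T ** PI) = N (PI - \<Psi> T ** PI)"
    by (simp add: unitarily_invariant_norm_unitary_left[OF N UV_unitary[OF T]])
  also have "\<dots> \<le> (\<Sum>b\<in>Basis. N b) * norm (\<Psi> T ** PI - PI)"
    by (simp add: unitarily_invariant_norm_le_norm[OF N] norm_minus_commute)
  also have "\<dots> \<le> (\<Sum>b\<in>Basis. N b) * (deviation_constant KF KR / Ep)"
    by (intro mult_left_mono norm_deviation_le KF KR sum_nonneg unitarily_invariant_norm_nonneg[OF N])
  finally show ?thesis .
qed

end

theorem theorem1:
  fixes T c :: real
    and HS :: "real \<Rightarrow> 's::finite op" and HB :: "'b::finite op"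
    and Hp :: "'s op" and Lam :: "real set" and Proj :: "real \<Rightarrow> 's op"
    and V :: "('s \<times> 'b) op" and P :: "'s op"
    and U0 :: "real \<Rightarrow> ('s \<times> 'b) op"
    and Up :: "real \<Rightarrow> real \<Rightarrow> 's op"
    and UV :: "real \<Rightarrow> real \<Rightarrow> ('s \<times> 'b) op"
    and N :: "('s \<times> 'b) op \<Rightarrow> real"
  assumes T_pos: "T > 0"
    and HS_cont: "continuous_on {0..T} HS"
    and HS_herm: "\<forall>t\<in>{0..T}. hermitian (HS t)"
    and HB_herm: "hermitian HB"
    and Hp_herm: "hermitian Hp"
    and Hp_spec: "spectral_decomp Hp Lam Proj"
    and V_herm: "hermitian V"
    and P_proj: "orth_proj P"
    and comm_P: "\<forall>t\<in>{0..T}. HS t ** P = P ** HS t"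
    and comm_Hp: "\<forall>t\<in>{0..T}. HS t ** Hp = Hp ** HS t"
    and pinch: "(\<Sum>a\<in>Lam. kron (Proj a) (mat 1) ** V ** kron (Proj a) (mat 1)) ** kron P (mat 1)
                 = cmat_smult (complex_of_real c) (kron P (mat 1))"
    and U0_evol: "evolution T (\<lambda>t. kron (HS t) (mat 1) + kron (mat 1) HB) U0"
    and Up_evol: "\<forall>Ep>0. evolution T (\<lambda>t. cmat_smult (complex_of_real Ep) Hp) (Up Ep)"
    and UV_evol: "\<forall>Ep>0. evolution T
                   (\<lambda>t. kron (HS t) (mat 1) + kron (mat 1) HB
                        + kron (cmat_smult (complex_of_real Ep) Hp) (mat 1) + V) (UV Ep)"
    and N_ui: "unitarily_invariant_norm N"
  shows "((\<lambda>Ep. N (UV Ep T ** kron P (mat 1)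
            - cmat_smult (exp (- \<i> * complex_of_real (c * T))) (U0 T ** kron (Up Ep T) (mat 1))
              ** kron P (mat 1))) \<longlongrightarrow> 0) at_top"
proof -
  let ?f = "\<lambda>Ep. N (UV Ep T ** kron P (mat 1)
      - cmat_smult (exp (- \<i> * complex_of_real (c * T))) (U0 T ** kron (Up Ep T) (mat 1)) ** kron P (mat 1))"
  have setting: "penalty_setting T c HS HB Hp Lam Proj V P U0"
    using T_pos by (intro penalty_setting.intro HS_cont HS_herm HB_herm Hp_herm Hp_spec V_herm comm_P comm_Hp
        pinch U0_evol) simp
  interpret penalty_setting T c HS HB Hp Lam Proj V P U0 by (fact setting)
  obtain KF where KF: "\<And>t. t \<in> {0..T} \<Longrightarrow> offdiag_sum Vint t \<le> KF"
    using offdiag_sum_bounded[OF Vint_continuous] by blast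
  obtain KR where KR: "\<And>t. t \<in> {0..T} \<Longrightarrow> offdiag_sum Vint' t \<le> KR"
    using offdiag_sum_bounded[OF Vint'_continuous] by blast
  define C where "C = (\<Sum>b\<in>Basis. N b) * deviation_constant KF KR"
  have bound: "?f Ep \<le> C / Ep" if Ep: "Ep > 0" for Ep
  proof -
    interpret penalty_evolution T c HS HB Hp Lam Proj V P U0 Ep "Up Ep" "UV Ep"
      using Ep Up_evol UV_evol by (intro penalty_evolution.intro setting penalty_evolution_axioms.intro) auto
    show ?thesis
      using norm_deviation_unitarily_invariant_le[OF N_ui KF KR] by (simp add: W_def C_def)
  qed
  have lim: "((\<lambda>Ep. C / Ep) \<longlongrightarrow> 0) at_top"
    by (intro tendsto_divide_0[OF tendsto_const] filterlim_at_top_imp_at_infinity filterlim_ident)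
  show ?thesis
  proof (rule tendsto_sandwich[OF _ _ tendsto_const lim])
    show "\<forall>\<^sub>F Ep in at_top. 0 \<le> ?f Ep"
      by (simp add: unitarily_invariant_norm_nonneg[OF N_ui])
    show "\<forall>\<^sub>F Ep in at_top. ?f Ep \<le> C / Ep"
      using eventually_gt_at_top[of 0] by eventually_elim (rule bound)
  qed
qed

end
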